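(* Let $\mathcal M$ be a valid catalytic machine, $x$ an input and $\tau$ an initial catalytic tape, and let $\langle\pi,u\rangle$ be any vertex of $\mathcal G_{\mathcal M,x,\tau}$. Then $\langle\pi,u\rangle\in V(\mathcal G^0_{\mathcal M,x}(\mathrm{acc}_\tau))\cup V(\mathcal G^0_{\mathcal M,x}(\mathrm{rej}_\tau))$.
   Context: A catalytic machine with work space $s$ and catalytic space $c$ has a read-only input tape holding $x$, a work tape of length $s$ initialized to $0^s$, a catalytic tape of length $c$ initialized to arbitrary $\tau$; non-deterministic/randomized machines have at each step a 0-choice and a 1-choice of transition (deterministic transitions count as both). It is valid if for every $x,\tau$ and every sequence of choices it halts in finite time with catalytic tape $\tau$. All auxiliary configuration information (state, head positions) is recorded on the work tape, so configurations are pairs $\langle\pi,u\rangle$ ($\pi\in\{0,1\}^c$ catalytic content, $u\in\{0,1\}^s$ work content); the start configuration is $\langle\tau,0^s\rangle$, the unique accepting halt configuration is $\mathrm{acc}_\tau=\langle\tau,1\,1\,0^{s-2}\rangle$ and the unique rejecting halt configuration is $\mathrm{rej}_\tau=\langle\tau,1\,0\,0^{s-2}\rangle$. The configuration graph $\mathcal G_{\mathcal M,x}$ has configurations as vertices and a directed edge $v\to v'$ when $v'$ is reachable from $v$ in one step, labeled by the choice bit(s). $\mathcal G_{\mathcal M,x,\tau}$ is the subgraph induced on configurations reachable from $\langle\tau,0^s\rangle$. The $0$-graph $\mathcal G^0_{\mathcal M,x}$ is the undirected graph retaining only edges labeled $0$ with directions forgotten, and $\mathcal G^0_{\mathcal M,x}(v)$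 is the connected component containing $v$. *)

theory Defs
  imports Main
begin

(* Configurations <pi, u>: pi = catalytic tape content, u = work tape content
   (the work tape also records state and head positions). *)
type_synonym conf = "bool list \<times> bool list"

(* A catalytic machine, abstracted to its configuration-level transition
   function: for input x and choice bit b, trans M x b v is the configuration
   reached from v in one step under choice b (deterministic transitions
   have trans M x False v = trans M x True v). *)
record cmachine =
  ws :: nat
  cs :: nat
  trans :: "bool list \<Rightarrow> bool \<Rightarrow> conf \<Rightarrow> conf"

definition configs :: "cmachine \<Rightarrow> conf set" where
  "configs M = {(p, u). length p = cs M \<and> length u = ws M}"

definition acc_work :: "cmachine \<Rightarrow> bool list" where
  "acc_work M = True # True # replicate (ws M - 2) False"

definition rej_work :: "cmachine \<Rightarrow> bool list" where
  "rej_work M = True # False # replicate (ws M - 2) False"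

definition halted :: "cmachine \<Rightarrow> conf \<Rightarrow> bool" where
  "halted M v \<longleftrightarrow> snd v = acc_work M \<or> snd v = rej_work M"

definition acc :: "cmachine \<Rightarrow> bool list \<Rightarrow> conf" where
  "acc M \<tau> = (\<tau>, acc_work M)"

definition rej :: "cmachine \<Rightarrow> bool list \<Rightarrow> conf" where
  "rej M \<tau> = (\<tau>, rej_work M)"

definition start :: "cmachine \<Rightarrow> bool list \<Rightarrow> conf" where
  "start M \<tau> = (\<tau>, replicate (ws M) False)"

fun run :: "cmachine \<Rightarrow> bool list \<Rightarrow> conf \<Rightarrow> (nat \<Rightarrow> bool) \<Rightarrow> nat \<Rightarrow> conf" where
  "run M x v ch 0 = v"
| "run M x v ch (Suc n) =
     (if halted M (run M x v ch n) then run M x v ch n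
      else trans M x (ch n) (run M x v ch n))"

definition wellformed :: "cmachine \<Rightarrow> bool" where
  "wellformed M \<longleftrightarrow> 2 \<le> ws M \<and>
     (\<forall>x b v. v \<in> configs M \<longrightarrow> trans M x b v \<in> configs M)"

definition valid :: "cmachine \<Rightarrow> bool" where
  "valid M \<longleftrightarrow> wellformed M \<and>
     (\<forall>x \<tau> ch. length \<tau> = cs M \<longrightarrow>
        (\<exists>n. halted M (run M x (start M \<tau>) ch n) \<and> fst (run M x (start M \<tau>) ch n) = \<tau>))"

definition edge :: "cmachine \<Rightarrow> bool list \<Rightarrow> bool \<Rightarrow> conf \<Rightarrow> conf \<Rightarrow> bool" where
  "edge M x b v v' \<longleftrightarrow> v \<in> configs M \<and> \<not> halted M v \<and> v' = trans M x b v"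

(* vertex set of G_{M,x,tau}: configurations reachable from <tau, 0^s> *)
definition reach_vertices :: "cmachine \<Rightarrow> bool list \<Rightarrow> bool list \<Rightarrow> conf set" where
  "reach_vertices M x \<tau> = {v. (\<lambda>a b. \<exists>c. edge M x c a b)\<^sup>*\<^sup>* (start M \<tau>) v}"

(* vertex set of the connected component of v in the undirected 0-graph G^0_{M,x} *)
definition comp0 :: "cmachine \<Rightarrow> bool list \<Rightarrow> conf \<Rightarrow> conf set" where
  "comp0 M x v = {w. w \<in> configs M \<and>
      (\<lambda>a b. edge M x False a b \<or> edge M x False b a)\<^sup>*\<^sup>* v w}"

end

theory Submission
  imports Defs
begin

text \<open>Every reachable configuration is reached by some choice prefix. Continuing that run with
  0-choices only, validity forces it to halt with the catalytic tape restored, i.e. in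
  \<open>acc\<^sub>\<tau>\<close> or \<open>rej\<^sub>\<tau>\<close>; the 0-edges traversed afterwards connect the configuration to that
  halting configuration in the 0-graph.\<close>

lemma run_cong_choices:
  assumes "\<forall>i<n. ch i = ch' i"
  shows "run M x v ch n = run M x v ch' n"
  using assms by (induction n) auto

lemma run_in_configs:
  assumes "wellformed M" "v \<in> configs M"
  shows "run M x v ch n \<in> configs M"
proof -
  have closed: "trans M x b w \<in> configs M" if "w \<in> configs M" for b w
    using assms(1) that unfolding wellformed_def by blast
  show ?thesis
    using assms(2) by (induction n) (simp_all add: closed)
qed

lemma run_halted_stable:
  assumes "halted M (run M x v ch j)" "j \<le> n"
  shows "run M x v ch n = run M x v ch j"
  using assms(2,1) by (induction n rule: dec_induct) auto

lemma reachable_by_run_with_zero_tail: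
  assumes "(\<lambda>a b. \<exists>c. edge M x c a b)\<^sup>*\<^sup>* v0 v"
  shows "\<exists>ch k. run M x v0 ch k = v \<and> (\<forall>i\<ge>k. \<not> ch i)"
  using assms
proof (induction rule: rtranclp_induct)
  case base
  have "run M x v0 (\<lambda>_. False) 0 = v0" by simp
  then show ?case by blast
next
  case (step w v)
  then obtain ch k where run_k: "run M x v0 ch k = w" and tail: "\<forall>i\<ge>k. \<not> ch i"
    by blast
  obtain c where step_wv: "edge M x c w v"
    using step.hyps(2) by blast
  define ch' where "ch' = ch(k := c)"
  have "run M x v0 ch' k = w"
    using run_k run_cong_choices[of k ch' ch] by (simp add: ch'_def)
  then have "run M x v0 ch' (Suc k) = v"
    using step_wv by (simp add: edge_def ch'_def)
  moreover have "\<forall>i\<ge>Suc k. \<not> ch' i"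
    using tail by (simp add: ch'_def)
  ultimately show ?case by blast
qed

lemma run_zero_tail_path:
  assumes "wellformed M" "v0 \<in> configs M" "\<forall>i\<ge>k. \<not> ch i" "k \<le> n"
  shows "(edge M x False)\<^sup>*\<^sup>* (run M x v0 ch k) (run M x v0 ch n)"
  using assms(4)
proof (induction n rule: dec_induct)
  case base
  show ?case by simp
next
  case (step n)
  have "run M x v0 ch n \<in> configs M"
    using run_in_configs[OF assms(1,2)] .
  moreover have "\<not> ch n"
    using assms(3) step.hyps(1) by simp
  ultimately have "run M x v0 ch (Suc n) = run M x v0 ch n
      \<or> edge M x False (run M x v0 ch n) (run M x v0 ch (Suc n))"
    by (auto simp: edge_def)
  then show ?case
    using step.IH by (auto intro: rtranclp.rtrancl_into_rtrancl)
qed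

lemma halted_restored_acc_or_rej:
  assumes "halted M v" "fst v = \<tau>"
  shows "v = acc M \<tau> \<or> v = rej M \<tau>"
  using assms by (cases v) (auto simp: halted_def acc_def rej_def)

lemma in_comp0_if_zero_path:
  assumes "w \<in> configs M" "(edge M x False)\<^sup>*\<^sup>* w v"
  shows "w \<in> comp0 M x v"
proof -
  have "(\<lambda>a b. edge M x False a b \<or> edge M x False b a)\<^sup>*\<^sup>* v w"
    using assms(2) by (induction rule: rtranclp_induct)
      (auto intro: converse_rtranclp_into_rtranclp)
  then show ?thesis
    using assms(1) by (simp add: comp0_def)
qed

theorem lemma4p8:
  fixes M :: cmachine and x \<tau> :: "bool list" and p u :: "bool list"
  assumes "valid M"
    and "length \<tau> = cs M"
    and "(p, u) \<in> reach_vertices M x \<tau>"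
  shows "(p, u) \<in> comp0 M x (acc M \<tau>) \<union> comp0 M x (rej M \<tau>)"
proof -
  let ?s = "start M \<tau>"
  have wf: "wellformed M" and start_conf: "?s \<in> configs M"
    using assms(1,2) by (simp_all add: valid_def start_def configs_def)
  obtain ch k where run_k: "run M x ?s ch k = (p, u)" and tail: "\<forall>i\<ge>k. \<not> ch i"
    using reachable_by_run_with_zero_tail assms(3) unfolding reach_vertices_def by fastforce
  obtain n where halt: "halted M (run M x ?s ch n)" and restored: "fst (run M x ?s ch n) = \<tau>"
    using assms(1,2) unfolding valid_def by fast
  let ?h = "run M x ?s ch (max k n)"
  have "?h = run M x ?s ch n"
    using run_halted_stable[OF halt, of "max k n"] by simp
  then have h_cases: "?h = acc M \<tau> \<or> ?h = rej M \<tau>"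
    using halted_restored_acc_or_rej[OF halt restored] by simp
  have "(p, u) \<in> configs M"
    using run_in_configs[OF wf start_conf, of x ch k] run_k by simp
  moreover have "(edge M x False)\<^sup>*\<^sup>* (p, u) ?h"
    using run_zero_tail_path[OF wf start_conf tail, where x = x and n = "max k n"] run_k by simp
  ultimately have "(p, u) \<in> comp0 M x ?h"
    by (rule in_comp0_if_zero_path)
  with h_cases show ?thesis
    by auto
qed

end
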